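(* Let $I$ be a countably infinite set, $\lambda,\rho\colon I\to I$ bijections, and $E$ a non-trivial directed $\lambda,\rho$-weakly commutative generalized pseudo effect algebra. If the kite pseudo effect algebra $K^{\lambda,\rho}_I(E)$ satisfies RDP$_1$ and has a least non-trivial normal ideal, then $K^{\lambda,\rho}_I(E)$ is isomorphic to $K^{\mathrm{id},\rho'}_{\mathbb Z}(E)$, where $\rho'(i)=i-1$ for $i\in\mathbb Z$.
   Context: A generalized pseudo effect algebra (GPEA) is a structure $(E;+,0)$ with partial binary $+$ and constant $0$ such that for all $a,b,c$: (GP1) $a+b$ and $(a+b)+c$ exist iff $b+c$ and $a+(b+c)$ exist, and then they are equal; (GP2) if $a+b$ exists there are $d,e$ with $a+b=d+a=b+e$; (GP3) left and right cancellation; (GP4) $a+b=0$ implies $a=b=0$; (GP5) $a+0=0+a=a$. Non-trivial: $E\neq\{0\}$. Order: $a\le b$ iff $a+c=b$ for some $c$; for $a\le b$, $b\ominus_\ell a$ is the unique $d$ with $d+a=b$, $a\ominus_r b$ the unique $e$ with $a+e=b$. Directed: any two elements have a common upper bound. RDP$_1$: whenever $a_1+a_2=b_1+b_2$ there are $c_{11},c_{12},c_{21},c_{22}$ with $a_1=c_{11}+c_{12}$, $a_2=c_{21}+c_{22}$, $b_1=c_{11}+c_{21}$, $b_2=c_{12}+c_{22}$, such that $0\le x\le c_{12}$, $0\le y\le c_{21}$ imply $x+y=y+x$. An ideal is a non-empty subset closed under existing sums and downward closed; normal if $x+N=N+x$ for all $x$ ($x+N=\{x+y\colon y\in N,\ x+y\text{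 defined}\}$, $N+x$ dually); non-trivial if $\neq\{0\}$; least non-trivial if contained in every non-trivial normal ideal. $\lambda,\rho$-weak commutativity: for all families $(f_j)$, $(a_i)$ in $E$ and all $i$: $f_{\rho^{-1}(i)}+a_i$ defined iff $a_i+f_{\lambda^{-1}(i)}$ defined, and $f_{\lambda^{-1}(i)}+a_i$ defined iff $a_i+f_{\rho^{-1}(i)}$ defined. Kite $K^{\lambda,\rho}_I(E)$ (a pseudo effect algebra): universe $E^I\uplus\overline E^I$, $\overline E=\{\bar a\colon a\in E\}$ a disjoint copy; $0=\langle 0\rangle$, $1=\langle\bar 0\rangle$; $\langle\bar a_i\rangle+\langle\bar b_i\rangle$ undefined; $\langle\bar a_i\colon i\in I\rangle+\langle f_j\colon j\in I\rangle=\langle\overline{f_{\rho^{-1}(i)}\ominus_r a_i}\rangle$ when $f_{\rho^{-1}(i)}\le a_i$ for all $i$; $\langle f_j\rangle+\langle\bar a_i\rangle=\langle\overline{a_i\ominus_\ell f_{\lambda^{-1}(i)}}\rangle$ when $f_{\lambda^{-1}(i)}\le a_i$ for all $i$; $\langle f_j\rangle+\langle g_j\rangle=\langle f_j+g_j\rangle$ when all coordinate sums are defined. Isomorphism means isomorphism of pseudo effect algebras. *)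

theory Defs
  imports "HOL-Library.Countable"
begin

(* A partial binary operation on a carrier set is modelled as an option-valued
function; p a b = None means that a + b is undefined. *)

type_synonym 'a pop = "'a \<Rightarrow> 'a \<Rightarrow> 'a option"

definition padd3l :: "'a pop \<Rightarrow> 'a \<Rightarrow> 'a \<Rightarrow> 'a \<Rightarrow> 'a option" where
  "padd3l p a b c = (case p a b of None \<Rightarrow> None | Some d \<Rightarrow> p d c)"

definition padd3r :: "'a pop \<Rightarrow> 'a \<Rightarrow> 'a \<Rightarrow> 'a \<Rightarrow> 'a option" where
  "padd3r p a b c = (case p b c of None \<Rightarrow> None | Some e \<Rightarrow> p a e)"

definition gpea :: "'a set \<Rightarrow> 'a pop \<Rightarrow> 'a \<Rightarrow> bool" where
  "gpea E p z \<longleftrightarrow>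
     z \<in> E \<and>
     (\<forall>a\<in>E. \<forall>b\<in>E. \<forall>c. p a b = Some c \<longrightarrow> c \<in> E) \<and>
     (\<forall>a\<in>E. \<forall>b\<in>E. \<forall>c\<in>E. padd3l p a b c = padd3r p a b c) \<and>
     (\<forall>a\<in>E. \<forall>b\<in>E. \<forall>s. p a b = Some s \<longrightarrow>
         (\<exists>d\<in>E. \<exists>e\<in>E. p d a = Some s \<and> p b e = Some s)) \<and>
     (\<forall>a\<in>E. \<forall>b\<in>E. \<forall>c\<in>E. p a b \<noteq> None \<and> p a b = p a c \<longrightarrow> b = c) \<and>
     (\<forall>a\<in>E. \<forall>b\<in>E. \<forall>c\<in>E. p b a \<noteq> None \<and> p b a = p c a \<longrightarrow> b = c) \<and>
     (\<forall>a\<in>E. \<forall>b\<in>E. p a b = Some z \<longrightarrow> a = z \<and> b = z) \<and>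
     (\<forall>a\<in>E. p a z = Some a \<and> p z a = Some a)"

definition pleq :: "'a set \<Rightarrow> 'a pop \<Rightarrow> 'a \<Rightarrow> 'a \<Rightarrow> bool" where
  "pleq E p a b \<longleftrightarrow> (\<exists>c\<in>E. p a c = Some b)"

definition lminus :: "'a set \<Rightarrow> 'a pop \<Rightarrow> 'a \<Rightarrow> 'a \<Rightarrow> 'a" where
  "lminus E p b a = (THE d. d \<in> E \<and> p d a = Some b)"

definition rminus :: "'a set \<Rightarrow> 'a pop \<Rightarrow> 'a \<Rightarrow> 'a \<Rightarrow> 'a" where
  "rminus E p a b = (THE e. e \<in> E \<and> p a e = Some b)"

definition directed :: "'a set \<Rightarrow> 'a pop \<Rightarrow> bool" where
  "directed E p \<longleftrightarrow> (\<forall>a\<in>E. \<forall>b\<in>E. \<exists>c\<in>E. pleq E p a c \<and> pleq E p b c)"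

definition weak_comm :: "'a set \<Rightarrow> 'a pop \<Rightarrow> ('i \<Rightarrow> 'i) \<Rightarrow> ('i \<Rightarrow> 'i) \<Rightarrow> bool" where
  "weak_comm E p lam rho \<longleftrightarrow>
     (\<forall>f a :: 'i \<Rightarrow> 'a. (\<forall>j. f j \<in> E) \<longrightarrow> (\<forall>i. a i \<in> E) \<longrightarrow>
        (\<forall>i. (p (f (inv rho i)) (a i) \<noteq> None \<longleftrightarrow> p (a i) (f (inv lam i)) \<noteq> None) \<and>
             (p (f (inv lam i)) (a i) \<noteq> None \<longleftrightarrow> p (a i) (f (inv rho i)) \<noteq> None)))"

(* The kite over the index type 'i: Inl f is \<langle>f\<^sub>j\<rangle> \<in> E\<^sup>I,
  Inr a is \<langle>a\<^sub>i bar\<rangle> \<in> Ebar\<^sup>I. *)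
definition kite_carrier :: "'a set \<Rightarrow> (('i \<Rightarrow> 'a) + ('i \<Rightarrow> 'a)) set" where
  "kite_carrier E = {Inl f | f. \<forall>i. f i \<in> E} \<union> {Inr f | f. \<forall>i. f i \<in> E}"

definition kite_zero :: "'a \<Rightarrow> ('i \<Rightarrow> 'a) + ('i \<Rightarrow> 'a)" where
  "kite_zero z = Inl (\<lambda>_. z)"

definition kite_one :: "'a \<Rightarrow> ('i \<Rightarrow> 'a) + ('i \<Rightarrow> 'a)" where
  "kite_one z = Inr (\<lambda>_. z)"

fun kite_plus :: "'a set \<Rightarrow> 'a pop \<Rightarrow> ('i \<Rightarrow> 'i) \<Rightarrow> ('i \<Rightarrow> 'i) \<Rightarrow>
     (('i \<Rightarrow> 'a) + ('i \<Rightarrow> 'a)) pop" where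
  "kite_plus E p lam rho (Inr a) (Inr b) = None"
| "kite_plus E p lam rho (Inr a) (Inl f) =
     (if \<forall>i. pleq E p (f (inv rho i)) (a i)
      then Some (Inr (\<lambda>i. rminus E p (f (inv rho i)) (a i))) else None)"
| "kite_plus E p lam rho (Inl f) (Inr a) =
     (if \<forall>i. pleq E p (f (inv lam i)) (a i)
      then Some (Inr (\<lambda>i. lminus E p (a i) (f (inv lam i)))) else None)"
| "kite_plus E p lam rho (Inl f) (Inl g) =
     (if \<forall>i. p (f i) (g i) \<noteq> None
      then Some (Inl (\<lambda>i. the (p (f i) (g i)))) else None)"

(* Riesz decomposition property RDP\<^sub>1. The equation x + y = y + x between
  partial sums is read as Kleene equality. *)
definition rdp1 :: "'a set \<Rightarrow> 'a pop \<Rightarrow> bool" where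
  "rdp1 E p \<longleftrightarrow>
     (\<forall>a1\<in>E. \<forall>a2\<in>E. \<forall>b1\<in>E. \<forall>b2\<in>E.
        p a1 a2 \<noteq> None \<and> p a1 a2 = p b1 b2 \<longrightarrow>
        (\<exists>c11\<in>E. \<exists>c12\<in>E. \<exists>c21\<in>E. \<exists>c22\<in>E.
           p c11 c12 = Some a1 \<and> p c21 c22 = Some a2 \<and>
           p c11 c21 = Some b1 \<and> p c12 c22 = Some b2 \<and>
           (\<forall>x\<in>E. \<forall>y\<in>E. pleq E p x c12 \<longrightarrow> pleq E p y c21 \<longrightarrow> p x y = p y x)))"

definition ideal :: "'a set \<Rightarrow> 'a pop \<Rightarrow> 'a set \<Rightarrow> bool" where
  "ideal E p N \<longleftrightarrow> N \<subseteq> E \<and> N \<noteq> {} \<and>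
     (\<forall>a\<in>N. \<forall>b\<in>N. \<forall>c. p a b = Some c \<longrightarrow> c \<in> N) \<and>
     (\<forall>a\<in>E. \<forall>b\<in>N. pleq E p a b \<longrightarrow> a \<in> N)"

definition normal_ideal :: "'a set \<Rightarrow> 'a pop \<Rightarrow> 'a set \<Rightarrow> bool" where
  "normal_ideal E p N \<longleftrightarrow> ideal E p N \<and>
     (\<forall>x\<in>E. {c. \<exists>y\<in>N. p x y = Some c} = {c. \<exists>y\<in>N. p y x = Some c})"

definition has_least_nontrivial_normal_ideal :: "'a set \<Rightarrow> 'a pop \<Rightarrow> 'a \<Rightarrow> bool" where
  "has_least_nontrivial_normal_ideal E p z \<longleftrightarrow>
     (\<exists>N. normal_ideal E p N \<and> N \<noteq> {z} \<and>
          (\<forall>M. normal_ideal E p M \<and> M \<noteq> {z} \<longrightarrow> N \<subseteq> M))"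

definition pea_iso :: "'a set \<Rightarrow> 'a pop \<Rightarrow> 'b set \<Rightarrow> 'b pop \<Rightarrow> ('a \<Rightarrow> 'b) \<Rightarrow> bool" where
  "pea_iso A p B q f \<longleftrightarrow> bij_betw f A B \<and>
     (\<forall>a\<in>A. \<forall>b\<in>A. q (f a) (f b) = map_option f (p a b))"

end

theory Submission
  imports Defs
begin

text \<open>Put \<open>s = \<rho>\<inverse> \<circ> \<lambda>\<close>. For every \<open>s\<close>-invariant \<open>J \<subseteq> I\<close>, the elements of \<open>E\<^sup>I\<close>
  supported on \<open>J\<close> form a normal ideal of the kite, which is non-trivial when \<open>J \<noteq> \<emptyset>\<close>.
  The ideals for \<open>J\<close> and \<open>I - J\<close> meet only in \<open>0\<close>, so a least non-trivial normal ideal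
  forces every non-empty \<open>s\<close>-invariant set to be all of \<open>I\<close>: \<open>s\<close> has a single orbit.
  As \<open>I\<close> is infinite, \<open>n \<mapsto> s\<^sup>n(i\<^sub>0)\<close> is then a bijection \<open>\<alpha> : \<int> \<rightarrow> I\<close>, and reindexing
  \<open>E\<^sup>I\<close> along \<open>\<alpha>\<close> and its barred copy along \<open>\<lambda> \<circ> \<alpha>\<close> is an isomorphism onto
  \<open>K\<^sup>i\<^sup>d\<^sup>,\<^sup>\<rho>\<^sup>'\<^sub>\<int>(E)\<close>.\<close>

lemma gpea_zero_mem: "gpea E p z \<Longrightarrow> z \<in> E"
  unfolding gpea_def by blast

lemma gpea_sum_mem: "gpea E p z \<Longrightarrow> a \<in> E \<Longrightarrow> b \<in> E \<Longrightarrow> p a b = Some c \<Longrightarrow> c \<in> E"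
  unfolding gpea_def by blast

lemma gpea_zero_neutral: "gpea E p z \<Longrightarrow> a \<in> E \<Longrightarrow> p a z = Some a \<and> p z a = Some a"
  unfolding gpea_def by blast

lemma gpea_sum_eq_zero: "gpea E p z \<Longrightarrow> a \<in> E \<Longrightarrow> b \<in> E \<Longrightarrow> p a b = Some z \<Longrightarrow> a = z \<and> b = z"
  unfolding gpea_def by blast

lemma gpea_cancel_left:
  "gpea E p z \<Longrightarrow> a \<in> E \<Longrightarrow> b \<in> E \<Longrightarrow> c \<in> E \<Longrightarrow> p a b = Some s \<Longrightarrow> p a c = Some s \<Longrightarrow> b = c"
  unfolding gpea_def by (metis option.distinct(1))

lemma gpea_cancel_right:
  "gpea E p z \<Longrightarrow> a \<in> E \<Longrightarrow> b \<in> E \<Longrightarrow> c \<in> E \<Longrightarrow> p b a = Some s \<Longrightarrow> p c a = Some s \<Longrightarrow> b = c"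
  unfolding gpea_def by (metis option.distinct(1))

lemma gpea_conjugates:
  "gpea E p z \<Longrightarrow> a \<in> E \<Longrightarrow> b \<in> E \<Longrightarrow> p a b = Some s \<Longrightarrow>
    \<exists>d\<in>E. \<exists>e\<in>E. p d a = Some s \<and> p b e = Some s"
  unfolding gpea_def by blast

lemma gpea_shift_left:
  assumes g: "gpea E p z" and "a \<in> E" "b \<in> E" and ab: "p a b = Some s"
  shows "\<exists>d\<in>E. p d a = Some s \<and> (b = z \<longrightarrow> d = z)"
proof -
  obtain d where d: "d \<in> E" "p d a = Some s"
    using gpea_conjugates[OF g assms(2-4)] by blast
  have "d = z" if "b = z"
  proof -
    have "s = a" using ab that gpea_zero_neutral[OF g \<open>a \<in> E\<close>] by simp
    then show ?thesis
      using d gpea_cancel_right[OF g \<open>a \<in> E\<close> d(1) gpea_zero_mem[OF g]] gpea_zero_neutral[OF g \<open>a \<in> E\<close>]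
      by simp
  qed
  with d show ?thesis by blast
qed

lemma gpea_shift_right:
  assumes g: "gpea E p z" and "a \<in> E" "b \<in> E" and ab: "p a b = Some s"
  shows "\<exists>e\<in>E. p b e = Some s \<and> (a = z \<longrightarrow> e = z)"
proof -
  obtain e where e: "e \<in> E" "p b e = Some s"
    using gpea_conjugates[OF g assms(2-4)] by blast
  have "e = z" if "a = z"
  proof -
    have "s = b" using ab that gpea_zero_neutral[OF g \<open>b \<in> E\<close>] by simp
    then show ?thesis
      using e gpea_cancel_left[OF g \<open>b \<in> E\<close> e(1) gpea_zero_mem[OF g]] gpea_zero_neutral[OF g \<open>b \<in> E\<close>]
      by simp
  qed
  with e show ?thesis by blast
qed

lemma rminus_eqI: "gpea E p z \<Longrightarrow> a \<in> E \<Longrightarrow> e \<in> E \<Longrightarrow> p a e = Some b \<Longrightarrow> rminus E p a b = e"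
  unfolding rminus_def by (rule the_equality) (auto intro: gpea_cancel_left)

lemma lminus_eqI: "gpea E p z \<Longrightarrow> a \<in> E \<Longrightarrow> d \<in> E \<Longrightarrow> p d a = Some b \<Longrightarrow> lminus E p b a = d"
  unfolding lminus_def by (rule the_equality) (auto intro: gpea_cancel_right)

lemma rminus_sum:
  assumes "gpea E p z" "a \<in> E" "pleq E p a b"
  shows "rminus E p a b \<in> E \<and> p a (rminus E p a b) = Some b"
  using assms rminus_eqI unfolding pleq_def by metis

lemma lminus_sum:
  assumes g: "gpea E p z" and "a \<in> E" "pleq E p a b"
  shows "lminus E p b a \<in> E \<and> p (lminus E p b a) a = Some b"
proof -
  obtain c where "c \<in> E" "p a c = Some b" using assms(3) unfolding pleq_def by blast
  then obtain d where "d \<in> E" "p d a = Some b" using gpea_shift_left[OF g \<open>a \<in> E\<close>] by blast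
  then show ?thesis using lminus_eqI[OF g \<open>a \<in> E\<close>] by simp
qed

subsection \<open>Integer iterates of a bijection\<close>

definition int_funpow :: "int \<Rightarrow> ('i \<Rightarrow> 'i) \<Rightarrow> 'i \<Rightarrow> 'i" where
  "int_funpow n s = (if 0 \<le> n then s ^^ nat n else inv s ^^ nat (- n))"

lemma int_funpow_0 [simp]: "int_funpow 0 s x = x"
  by (simp add: int_funpow_def)

lemma int_funpow_succ:
  assumes "bij s"
  shows "int_funpow (n + 1) s x = s (int_funpow n s x)"
proof (cases "0 \<le> n")
  case True
  then have "nat (n + 1) = Suc (nat n)" by simp
  with True show ?thesis by (simp add: int_funpow_def)
next
  case False
  then have "n = -1 \<or> nat (- n) = Suc (nat (- (n + 1)))" by auto
  with False assms show ?thesis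
    by (auto simp: int_funpow_def bij_is_surj surj_f_inv_f)
qed

lemma int_funpow_pred:
  assumes "bij s"
  shows "int_funpow (n - 1) s x = inv s (int_funpow n s x)"
  using int_funpow_succ[OF assms, of "n - 1" x] assms by (simp add: bij_is_inj)

lemma int_funpow_add:
  assumes "bij s"
  shows "int_funpow (k + m) s x = int_funpow k s (int_funpow m s x)"
proof (induction k rule: int_induct[where k = 0])
  case (step1 i)
  then show ?case
    using int_funpow_succ[OF assms, of "i + m"] int_funpow_succ[OF assms, of i]
    by (simp add: ac_simps)
next
  case (step2 i)
  then show ?case
    using int_funpow_pred[OF assms, of "i + m"] int_funpow_pred[OF assms, of i]
    by (simp add: algebra_simps)
qed simp

lemma int_funpow_mult_period:
  assumes s: "bij s" and period: "int_funpow d s y = y"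
  shows "int_funpow (k * d) s y = y"
proof (induction k rule: int_induct[where k = 0])
  case (step1 k)
  then show ?case
    using int_funpow_add[OF s, of d "k * d"] period by (simp add: algebra_simps)
next
  case (step2 k)
  have "int_funpow (- d) s y = y"
    using int_funpow_add[OF s, of "- d" d y] period by simp
  with step2 show ?case
    using int_funpow_add[OF s, of "- d" "k * d"] by (simp add: algebra_simps)
qed simp

lemma int_funpow_mod_period:
  assumes "bij s" "int_funpow d s y = y"
  shows "int_funpow n s y = int_funpow (n mod d) s y"
proof -
  have "int_funpow n s y = int_funpow (n mod d) s (int_funpow (n div d * d) s y)"
    using int_funpow_add[OF assms(1), of "n mod d" "n div d * d"] by simp
  with int_funpow_mult_period[OF assms] show ?thesis by simp
qed

text \<open>A periodic orbit is finite, so an orbit covering an infinite type cannot repeat.\<close>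

lemma bij_int_funpow:
  assumes s: "bij s" and inf: "infinite (UNIV :: 'i set)"
    and orbit: "range (\<lambda>n. int_funpow n s x) = (UNIV :: 'i set)"
  shows "bij (\<lambda>n. int_funpow n s x)"
proof -
  have no_repeat: "m = n" if eq: "int_funpow m s x = int_funpow n s x" and mn: "m < n" for m n
  proof -
    define y where "y = int_funpow m s x"
    define d where "d = n - m"
    have "int_funpow d s y = y"
      using int_funpow_add[OF s, of d m x] eq unfolding y_def d_def by simp
    have "w \<in> (\<lambda>j. int_funpow j s y) ` {0..<d}" for w
    proof -
      obtain k where "w = int_funpow k s x" using orbit by (metis rangeE UNIV_I)
      then have "w = int_funpow ((k - m) mod d) s y"
        using int_funpow_add[OF s, of "k - m" m x] int_funpow_mod_period[OF s \<open>int_funpow d s y = y\<close>]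
        unfolding y_def by simp
      moreover have "(k - m) mod d \<in> {0..<d}" using mn unfolding d_def by simp
      ultimately show ?thesis by blast
    qed
    then have "finite (UNIV :: 'i set)" by (metis finite_atLeastLessThan_int finite_imageI finite_subset subsetI)
    with inf show ?thesis by contradiction
  qed
  have "inj (\<lambda>n. int_funpow n s x)"
  proof (rule injI)
    fix m n assume eq: "int_funpow m s x = int_funpow n s x"
    show "m = n"
      using no_repeat[OF eq] no_repeat[OF eq[symmetric]] by (cases m n rule: linorder_cases) auto
  qed
  with orbit show ?thesis by (simp add: bij_def)
qed

lemma int_funpow_orbit_invariant:
  assumes "bij s"
  shows "s j \<in> range (\<lambda>n. int_funpow n s x) \<longleftrightarrow> j \<in> range (\<lambda>n. int_funpow n s x)"
proof
  assume "s j \<in> range (\<lambda>n. int_funpow n s x)"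
  then obtain n where "s j = int_funpow n s x" by auto
  then have "j = int_funpow (n - 1) s x"
    using int_funpow_pred[OF assms] assms by (metis bij_is_inj inv_f_f)
  then show "j \<in> range (\<lambda>n. int_funpow n s x)" by blast
next
  assume "j \<in> range (\<lambda>n. int_funpow n s x)"
  then obtain n where "j = int_funpow n s x" by auto
  then have "s j = int_funpow (n + 1) s x" using int_funpow_succ[OF assms] by simp
  then show "s j \<in> range (\<lambda>n. int_funpow n s x)" by blast
qed

subsection \<open>Ideals of the kite supported on a set of indices\<close>

definition kite_supported :: "'a set \<Rightarrow> 'a \<Rightarrow> 'i set \<Rightarrow> (('i \<Rightarrow> 'a) + ('i \<Rightarrow> 'a)) set" where
  "kite_supported E z J = {Inl f | f. (\<forall>i. f i \<in> E) \<and> (\<forall>i. i \<notin> J \<longrightarrow> f i = z)}"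

lemma kite_supported_ideal:
  assumes g: "gpea E p z"
  shows "ideal (kite_carrier E) (kite_plus E p lam rho) (kite_supported E z J)"
  unfolding ideal_def
proof (intro conjI ballI allI impI)
  show "kite_supported E z J \<subseteq> kite_carrier E" "kite_supported E z J \<noteq> {}"
    unfolding kite_supported_def kite_carrier_def using gpea_zero_mem[OF g] by auto
next
  fix a b c
  assume "a \<in> kite_supported E z J" "b \<in> kite_supported E z J" and c: "kite_plus E p lam rho a b = Some c"
  then obtain f h where f: "a = Inl f" "\<forall>i. f i \<in> E" "\<forall>i. i \<notin> J \<longrightarrow> f i = z"
    and h: "b = Inl h" "\<forall>i. h i \<in> E" "\<forall>i. i \<notin> J \<longrightarrow> h i = z"
    unfolding kite_supported_def by auto
  with c have sum: "\<forall>i. p (f i) (h i) = Some (the (p (f i) (h i)))"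
    and c_eq: "c = Inl (\<lambda>i. the (p (f i) (h i)))"
    by (auto split: if_splits)
  have "\<forall>i. the (p (f i) (h i)) \<in> E" using sum f h gpea_sum_mem[OF g] by metis
  moreover have "\<forall>i. i \<notin> J \<longrightarrow> the (p (f i) (h i)) = z"
    using f h gpea_zero_neutral[OF g gpea_zero_mem[OF g]] by auto
  ultimately show "c \<in> kite_supported E z J" unfolding kite_supported_def c_eq by auto
next
  fix a b
  assume a: "a \<in> kite_carrier E" and "b \<in> kite_supported E z J"
    and "pleq (kite_carrier E) (kite_plus E p lam rho) a b"
  then obtain f c where f: "b = Inl f" "\<forall>i. i \<notin> J \<longrightarrow> f i = z"
    and c: "c \<in> kite_carrier E" "kite_plus E p lam rho a c = Some b"
    unfolding kite_supported_def pleq_def by auto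
  \<comment> \<open>a sum with a barred summand is barred, so both summands of \<open>b\<close> lie in \<open>E\<^sup>I\<close>\<close>
  then obtain g h where gh: "a = Inl g" "c = Inl h" "\<forall>i. g i \<in> E" "\<forall>i. h i \<in> E"
    using a unfolding kite_carrier_def by (cases a; cases c) (auto split: if_splits)
  with c f have "\<forall>i. p (g i) (h i) = Some (f i)" by (auto split: if_splits)
  with f gh have "\<forall>i. i \<notin> J \<longrightarrow> g i = z" using gpea_sum_eq_zero[OF g] by metis
  with gh show "a \<in> kite_supported E z J" unfolding kite_supported_def by auto
qed

lemma kite_supported_translate_Inl_left:
  assumes g: "gpea E p z" and x: "\<forall>i. x i \<in> E" and y: "y \<in> kite_supported E z J"
    and sum: "kite_plus E p lam rho (Inl x) y = Some c"
  shows "\<exists>y'\<in>kite_supported E z J. kite_plus E p lam rho y' (Inl x) = Some c"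
proof -
  obtain f where f: "y = Inl f" "\<forall>i. f i \<in> E" "\<forall>i. i \<notin> J \<longrightarrow> f i = z"
    using y unfolding kite_supported_def by auto
  with sum have xf: "\<forall>i. p (x i) (f i) = Some (the (p (x i) (f i)))"
    and c: "c = Inl (\<lambda>i. the (p (x i) (f i)))"
    by (auto split: if_splits)
  have "\<forall>i. \<exists>d\<in>E. p d (x i) = p (x i) (f i) \<and> (f i = z \<longrightarrow> d = z)"
    using gpea_shift_left[OF g] x f(2) xf by metis
  then obtain d where d: "\<forall>i. d i \<in> E \<and> p (d i) (x i) = p (x i) (f i) \<and> (f i = z \<longrightarrow> d i = z)"
    by metis
  then have "Inl d \<in> kite_supported E z J" using f unfolding kite_supported_def by auto
  moreover have "kite_plus E p lam rho (Inl d) (Inl x) = Some c"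
    using d xf c by (simp del: not_None_eq) (metis option.distinct(1))
  ultimately show ?thesis by blast
qed

lemma kite_supported_translate_Inl_right:
  assumes g: "gpea E p z" and x: "\<forall>i. x i \<in> E" and y: "y \<in> kite_supported E z J"
    and sum: "kite_plus E p lam rho y (Inl x) = Some c"
  shows "\<exists>y'\<in>kite_supported E z J. kite_plus E p lam rho (Inl x) y' = Some c"
proof -
  obtain f where f: "y = Inl f" "\<forall>i. f i \<in> E" "\<forall>i. i \<notin> J \<longrightarrow> f i = z"
    using y unfolding kite_supported_def by auto
  with sum have fx: "\<forall>i. p (f i) (x i) = Some (the (p (f i) (x i)))"
    and c: "c = Inl (\<lambda>i. the (p (f i) (x i)))"
    by (auto split: if_splits)
  have "\<forall>i. \<exists>e\<in>E. p (x i) e = p (f i) (x i) \<and> (f i = z \<longrightarrow> e = z)"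
    using gpea_shift_right[OF g] x f(2) fx by metis
  then obtain e where e: "\<forall>i. e i \<in> E \<and> p (x i) (e i) = p (f i) (x i) \<and> (f i = z \<longrightarrow> e i = z)"
    by metis
  then have "Inl e \<in> kite_supported E z J" using f unfolding kite_supported_def by auto
  moreover have "kite_plus E p lam rho (Inl x) (Inl e) = Some c"
    using e fx c by (simp del: not_None_eq) (metis option.distinct(1))
  ultimately show ?thesis by blast
qed

lemma kite_supported_translate_Inr_left:
  assumes g: "gpea E p z" and lam: "surj lam" and J: "\<And>j. inv rho (lam j) \<in> J \<Longrightarrow> j \<in> J"
    and y: "y \<in> kite_supported E z J" and sum: "kite_plus E p lam rho (Inr a) y = Some c"
  shows "\<exists>y'\<in>kite_supported E z J. kite_plus E p lam rho y' (Inr a) = Some c"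
proof -
  obtain f where f: "y = Inl f" "\<forall>i. f i \<in> E" "\<forall>i. i \<notin> J \<longrightarrow> f i = z"
    using y unfolding kite_supported_def by auto
  with sum have le: "\<forall>i. pleq E p (f (inv rho i)) (a i)"
    and c: "c = Inr (\<lambda>i. rminus E p (f (inv rho i)) (a i))"
    by (auto split: if_splits)
  define e where "e i = rminus E p (f (inv rho i)) (a i)" for i
  have e: "e i \<in> E" "p (f (inv rho i)) (e i) = Some (a i)" for i
    using rminus_sum[OF g] f(2) le unfolding e_def by auto
  have "\<forall>i. \<exists>e'\<in>E. p (e i) e' = Some (a i) \<and> (f (inv rho i) = z \<longrightarrow> e' = z)"
    using gpea_shift_right[OF g] e f(2) by metis
  then obtain e' where e': "\<forall>i. e' i \<in> E \<and> p (e i) (e' i) = Some (a i) \<and> (f (inv rho i) = z \<longrightarrow> e' i = z)"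
    by metis
  have lam_inv: "lam (inv lam i) = i" for i using lam by (simp add: surj_f_inv_f)
  have "Inl (e' \<circ> lam) \<in> kite_supported E z J"
    using e' f(3) J unfolding kite_supported_def by auto
  moreover have "pleq E p (e' i) (a i)" for i
    using gpea_shift_right[OF g] e e' unfolding pleq_def by blast
  moreover have "lminus E p (a i) (e' i) = e i" for i
    using lminus_eqI[OF g] e e' by blast
  ultimately show ?thesis using c lam_inv unfolding e_def by (auto intro!: bexI[of _ "Inl (e' \<circ> lam)"])
qed

lemma kite_supported_translate_Inr_right:
  assumes g: "gpea E p z" and rho: "surj rho" and J: "\<And>j. inv lam (rho j) \<in> J \<Longrightarrow> j \<in> J"
    and y: "y \<in> kite_supported E z J" and sum: "kite_plus E p lam rho y (Inr a) = Some c"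
  shows "\<exists>y'\<in>kite_supported E z J. kite_plus E p lam rho (Inr a) y' = Some c"
proof -
  obtain f where f: "y = Inl f" "\<forall>i. f i \<in> E" "\<forall>i. i \<notin> J \<longrightarrow> f i = z"
    using y unfolding kite_supported_def by auto
  with sum have le: "\<forall>i. pleq E p (f (inv lam i)) (a i)"
    and c: "c = Inr (\<lambda>i. lminus E p (a i) (f (inv lam i)))"
    by (auto split: if_splits)
  define d where "d i = lminus E p (a i) (f (inv lam i))" for i
  have d: "d i \<in> E" "p (d i) (f (inv lam i)) = Some (a i)" for i
    using lminus_sum[OF g] f(2) le unfolding d_def by auto
  have "\<forall>i. \<exists>d'\<in>E. p d' (d i) = Some (a i) \<and> (f (inv lam i) = z \<longrightarrow> d' = z)"
    using gpea_shift_left[OF g] d f(2) by metis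
  then obtain d' where d': "\<forall>i. d' i \<in> E \<and> p (d' i) (d i) = Some (a i) \<and> (f (inv lam i) = z \<longrightarrow> d' i = z)"
    by metis
  have rho_inv: "rho (inv rho i) = i" for i using rho by (simp add: surj_f_inv_f)
  have "Inl (d' \<circ> rho) \<in> kite_supported E z J"
    using d' f(3) J unfolding kite_supported_def by auto
  moreover have "pleq E p (d' i) (a i)" for i
    using d d' unfolding pleq_def by blast
  moreover have "rminus E p (d' i) (a i) = d i" for i
    using rminus_eqI[OF g] d d' by blast
  ultimately show ?thesis using c rho_inv unfolding d_def by (auto intro!: bexI[of _ "Inl (d' \<circ> rho)"])
qed

lemma kite_supported_normal_ideal:
  assumes g: "gpea E p z" and lam: "bij lam" and rho: "bij rho"
    and J: "\<And>j. inv rho (lam j) \<in> J \<longleftrightarrow> j \<in> J"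
  shows "normal_ideal (kite_carrier E) (kite_plus E p lam rho) (kite_supported E z J)"
proof -
  have J_rev: "j \<in> J" if "inv lam (rho j) \<in> J" for j
    using that J[of "inv lam (rho j)"] lam rho by (simp add: bij_is_inj bij_is_surj surj_f_inv_f)
  have left: "\<exists>y'\<in>kite_supported E z J. kite_plus E p lam rho y' x = Some c"
    if "x \<in> kite_carrier E" "y \<in> kite_supported E z J" "kite_plus E p lam rho x y = Some c" for x y c
  proof (cases x)
    case (Inl f)
    with that(1) have "\<forall>i. f i \<in> E" unfolding kite_carrier_def by auto
    with Inl that(2,3) show ?thesis using kite_supported_translate_Inl_left[OF g] by simp
  next
    case (Inr a)
    with that(2,3) show ?thesis
      using kite_supported_translate_Inr_left[OF g bij_is_surj[OF lam] J[THEN iffD1]] by simp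
  qed
  have right: "\<exists>y'\<in>kite_supported E z J. kite_plus E p lam rho x y' = Some c"
    if "x \<in> kite_carrier E" "y \<in> kite_supported E z J" "kite_plus E p lam rho y x = Some c" for x y c
  proof (cases x)
    case (Inl f)
    with that(1) have "\<forall>i. f i \<in> E" unfolding kite_carrier_def by auto
    with Inl that(2,3) show ?thesis using kite_supported_translate_Inl_right[OF g] by simp
  next
    case (Inr a)
    with that(2,3) show ?thesis
      using kite_supported_translate_Inr_right[OF g bij_is_surj[OF rho] J_rev] by simp
  qed
  show ?thesis
    unfolding normal_ideal_def
    using kite_supported_ideal[OF g] left right by (intro conjI ballI set_eqI iffI) auto
qed

lemma kite_supported_nontrivial:
  assumes g: "gpea E p z" and "E \<noteq> {z}" and "j \<in> J"
  shows "kite_supported E z J \<noteq> {kite_zero z}"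
proof
  obtain e where e: "e \<in> E" "e \<noteq> z" using assms(2) gpea_zero_mem[OF g] by blast
  have "Inl (\<lambda>i. if i = j then e else z) \<in> kite_supported E z J"
    unfolding kite_supported_def using e \<open>j \<in> J\<close> gpea_zero_mem[OF g] by auto
  moreover assume "kite_supported E z J = {kite_zero z}"
  ultimately have "(\<lambda>i. if i = j then e else z) = (\<lambda>_. z)" unfolding kite_zero_def by auto
  then show False using e(2) by (metis (full_types))
qed

lemma kite_supported_Int_Compl: "kite_supported E z J \<inter> kite_supported E z (- J) \<subseteq> {kite_zero z}"
  unfolding kite_supported_def kite_zero_def by (auto intro!: ext)

lemma kite_invariant_set_eq_UNIV:
  assumes g: "gpea E p z" and "E \<noteq> {z}" and lam: "bij lam" and rho: "bij rho"
    and least: "has_least_nontrivial_normal_ideal (kite_carrier E) (kite_plus E p lam rho)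
                  (kite_zero z :: ('i \<Rightarrow> 'a) + ('i \<Rightarrow> 'a))"
    and J: "\<And>j. inv rho (lam j) \<in> J \<longleftrightarrow> j \<in> J" and "J \<noteq> {}"
  shows "J = UNIV"
proof (rule ccontr)
  assume "J \<noteq> UNIV"
  obtain N where N: "normal_ideal (kite_carrier E) (kite_plus E p lam rho) N"
      "N \<noteq> {kite_zero z :: ('i \<Rightarrow> 'a) + ('i \<Rightarrow> 'a)}"
    and N_least: "\<And>M. normal_ideal (kite_carrier E) (kite_plus E p lam rho) M \<Longrightarrow>
                     M \<noteq> {kite_zero z} \<Longrightarrow> N \<subseteq> M"
    using least unfolding has_least_nontrivial_normal_ideal_def by blast
  have N_below: "N \<subseteq> kite_supported E z J'"
    if inv: "\<And>j. inv rho (lam j) \<in> J' \<longleftrightarrow> j \<in> J'" and ne: "J' \<noteq> {}" for J'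
  proof -
    obtain j where "j \<in> J'" using ne by blast
    show ?thesis
      using N_least[OF kite_supported_normal_ideal[OF g lam rho inv]
          kite_supported_nontrivial[OF g \<open>E \<noteq> {z}\<close> \<open>j \<in> J'\<close>]] .
  qed
  have "N \<subseteq> kite_supported E z J" using N_below[OF J \<open>J \<noteq> {}\<close>] .
  moreover have "N \<subseteq> kite_supported E z (- J)"
  proof (rule N_below)
    show "- J \<noteq> {}" using \<open>J \<noteq> UNIV\<close> by blast
  qed (simp add: J)
  ultimately have "N \<subseteq> {kite_zero z}"
    using kite_supported_Int_Compl[of E z J] by (meson Int_greatest order_trans)
  moreover have "N \<noteq> {}" using N(1) unfolding normal_ideal_def ideal_def by blast
  ultimately show False using N(2) by blast
qed

subsection \<open>Reindexing a kite\<close>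

lemma kite_reindex_iso:
  fixes \<alpha> \<beta> :: "'j \<Rightarrow> 'i" and lam rho :: "'i \<Rightarrow> 'i" and lam' rho' :: "'j \<Rightarrow> 'j"
  assumes \<alpha>: "bij \<alpha>" and \<beta>: "bij \<beta>"
    and "bij lam" "bij rho" "bij lam'" "bij rho'"
    and lam_lam': "\<And>n. \<beta> (lam' n) = lam (\<alpha> n)" and rho_rho': "\<And>n. \<beta> (rho' n) = rho (\<alpha> n)"
  shows "pea_iso (kite_carrier E) (kite_plus E p lam rho) (kite_carrier E) (kite_plus E p lam' rho')
           (case_sum (\<lambda>f. Inl (f \<circ> \<alpha>)) (\<lambda>a. Inr (a \<circ> \<beta>)))"
    (is "pea_iso _ _ _ _ ?F")
proof -
  have inv_lam: "inv lam (\<beta> n) = \<alpha> (inv lam' n)" for n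
    using lam_lam'[of "inv lam' n"] assms(3,5) by (simp add: bij_is_inj bij_is_surj surj_f_inv_f)
  have inv_rho: "inv rho (\<beta> n) = \<alpha> (inv rho' n)" for n
    using rho_rho'[of "inv rho' n"] assms(4,6) by (simp add: bij_is_inj bij_is_surj surj_f_inv_f)
  have all_\<alpha>: "(\<forall>n. P (\<alpha> n)) \<longleftrightarrow> (\<forall>i. P i)" for P
    using \<alpha> by (metis bij_is_surj surj_f_inv_f)
  have all_\<beta>: "(\<forall>n. P (\<beta> n)) \<longleftrightarrow> (\<forall>i. P i)" for P
    using \<beta> by (metis bij_is_surj surj_f_inv_f)
  have "bij_betw ?F (kite_carrier E) (kite_carrier E)"
  proof (rule bij_betw_byWitness[where f' = "case_sum (\<lambda>f. Inl (f \<circ> inv \<alpha>)) (\<lambda>a. Inr (a \<circ> inv \<beta>))"])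
    show "?F ` kite_carrier E \<subseteq> kite_carrier E"
      "case_sum (\<lambda>f. Inl (f \<circ> inv \<alpha>)) (\<lambda>a. Inr (a \<circ> inv \<beta>)) ` kite_carrier E \<subseteq> kite_carrier E"
      unfolding kite_carrier_def by auto
  qed (use \<alpha> \<beta> in \<open>auto simp: o_def bij_is_inj bij_is_surj surj_f_inv_f split: sum.split\<close>)
  moreover have "kite_plus E p lam' rho' (?F a) (?F b) = map_option ?F (kite_plus E p lam rho a b)" for a b
  proof (cases a; cases b)
    fix f g assume "a = Inl f" "b = Inl g"
    then show ?thesis using all_\<alpha>[of "\<lambda>i. p (f i) (g i) \<noteq> None"] by (auto simp: o_def)
  next
    fix f g assume "a = Inl f" "b = Inr g"
    then show ?thesis using all_\<beta>[of "\<lambda>i. pleq E p (f (inv lam i)) (g i)"] inv_lam by (auto simp: o_def)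
  next
    fix f g assume "a = Inr f" "b = Inl g"
    then show ?thesis using all_\<beta>[of "\<lambda>i. pleq E p (g (inv rho i)) (f i)"] inv_rho by (auto simp: o_def)
  qed simp
  ultimately show ?thesis unfolding pea_iso_def by blast
qed

theorem theorem4p9:
  fixes E :: "'a set" and p :: "'a pop" and z :: 'a
    and lam rho :: "'i::countable \<Rightarrow> 'i"
  assumes "infinite (UNIV :: 'i set)"
    and "bij lam" and "bij rho"
    and "gpea E p z" and "E \<noteq> {z}" and "directed E p"
    and "weak_comm E p lam rho"
    and "rdp1 (kite_carrier E) (kite_plus E p lam rho)"
    and "has_least_nontrivial_normal_ideal (kite_carrier E) (kite_plus E p lam rho)
           (kite_zero z :: ('i \<Rightarrow> 'a) + ('i \<Rightarrow> 'a))"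
  shows "\<exists>f. pea_iso (kite_carrier E :: (('i \<Rightarrow> 'a) + ('i \<Rightarrow> 'a)) set) (kite_plus E p lam rho)
               (kite_carrier E :: ((int \<Rightarrow> 'a) + (int \<Rightarrow> 'a)) set)
               (kite_plus E p id (\<lambda>i::int. i - 1)) f"
proof -
  define s where "s = inv rho \<circ> lam"
  have s: "bij s" unfolding s_def using assms(2,3) by (simp add: bij_comp bij_imp_bij_inv)
  obtain i0 :: 'i where True by simp
  define \<alpha> where "\<alpha> = (\<lambda>n. int_funpow n s i0)"
  have "range \<alpha> = UNIV"
  proof (rule kite_invariant_set_eq_UNIV[OF assms(4,5,2,3,9)])
    show "inv rho (lam j) \<in> range \<alpha> \<longleftrightarrow> j \<in> range \<alpha>" for j
      using int_funpow_orbit_invariant[OF s] unfolding \<alpha>_def s_def by simp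
  qed simp
  then have "bij \<alpha>" using bij_int_funpow[OF s assms(1)] unfolding \<alpha>_def by simp
  have "(lam \<circ> \<alpha>) (id n) = lam (\<alpha> n)" for n by simp
  moreover have "(lam \<circ> \<alpha>) (n - 1) = rho (\<alpha> n)" for n
    using int_funpow_succ[OF s, of "n - 1" i0] assms(3)
    unfolding \<alpha>_def s_def by (simp add: bij_is_surj surj_f_inv_f)
  ultimately have "pea_iso (kite_carrier E) (kite_plus E p lam rho) (kite_carrier E)
      (kite_plus E p id (\<lambda>i::int. i - 1)) (case_sum (\<lambda>f. Inl (f \<circ> \<alpha>)) (\<lambda>a. Inr (a \<circ> (lam \<circ> \<alpha>))))"
    by (rule kite_reindex_iso[OF \<open>bij \<alpha>\<close> bij_comp[OF \<open>bij \<alpha>\<close> assms(2)] assms(2,3) bij_id bij_diff_right])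
  then show ?thesis by blast
qed

end
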